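(* Let $\mathcal{D}=(\mathcal{P},\mathcal{B},\mathcal{I})$ be a quasi-symmetric $(v,b,r,k,\lambda_1,0)$ SPBIBD of type $(k-1,t)$ with intersection numbers $x=0$ and $y=1$, let $\Gamma$ be its incidence graph, and assume $r\ge3$. Then: (i) $\Gamma$ is almost $2$-$\mathcal{B}$-homogeneous if and only if $\mathcal{D}$ is a generalized quadrangle; (ii) $\Gamma$ is not $2$-$\mathcal{B}$-homogeneous.
   Context: A design $\mathcal{D}=(\mathcal{P},\mathcal{B},\mathcal{I})$ is an incidence structure with $|\mathcal{P}|=v$, $|\mathcal{B}|=b$, every block incident with exactly $k$ points and every point with exactly $r$ blocks; standing assumptions: $v>k$ and $r<b$. $(p,B)$ is a flag if $p\in B$, a non-flag otherwise. $\mathcal{D}$ is a $(v,b,r,k,\lambda_1,\lambda_2)$ SPBIBD of type $(s,t)$ if (i) any two distinct points are together in exactly $\lambda_1$ or exactly $\lambda_2$ blocks; (ii) for every flag $(p,B)$, the number of points of $B$ other than $p$ lying with $p$ in exactly $\lambda_1$ blocks is $s$; (iii) for every non-flag $(p,B)$, the number of points of $B$ lying with $p$ in exactly $\lambda_1$ blocks is $t$. Quasi-symmetric with intersection numbers $x<y$: any two distinct blocks share exactly $x$ or $y$ points, both values occurring. A partial geometry is such a design in which any two points are together in at most one block and there is a constant $t'$ ($1\le t'\le r$, $1\le t'\le k$) such that for every non-flag $(p,B)$ exactly $t'$ blocks are incident with $p$ and meet $B$; it is a generalized quadrangle if $t'=1$. The incidence graph is the bipartite graph on $\mathcal{P}\cup\mathcal{B}$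 with $p\sim B$ iff $p\in B$. $\Gamma_i(u)$ is the set of vertices at distance $i$ from $u$, $\Gamma(u)=\Gamma_1(u)$. For a $(Y,Y')$-bipartite graph in which every vertex of $Y$ has eccentricity $D\ge3$: it is almost $2$-$Y$-homogeneous if for each $1\le i\le D-2$ the number $|\Gamma(x)\cap\Gamma(y)\cap\Gamma_{i-1}(z)|$ is the same for all $x\in Y$, $y\in\Gamma_2(x)$, $z\in\Gamma_i(x)\cap\Gamma_i(y)$; $2$-$Y$-homogeneous if this holds for each $1\le i\le D-1$. Here $Y=\mathcal{B}$. *)

theory Defs
  imports Main
begin

definition blk_pts :: "'p set \<Rightarrow> ('p \<Rightarrow> 'b \<Rightarrow> bool) \<Rightarrow> 'b \<Rightarrow> 'p set" where
  "blk_pts P I B = {p \<in> P. I p B}"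

definition pt_blks :: "'b set \<Rightarrow> ('p \<Rightarrow> 'b \<Rightarrow> bool) \<Rightarrow> 'p \<Rightarrow> 'b set" where
  "pt_blks Bs I p = {B \<in> Bs. I p B}"

definition design ::
  "'p set \<Rightarrow> 'b set \<Rightarrow> ('p \<Rightarrow> 'b \<Rightarrow> bool) \<Rightarrow> nat \<Rightarrow> nat \<Rightarrow> nat \<Rightarrow> nat \<Rightarrow> bool" where
  "design P Bs I v b r k \<longleftrightarrow>
     finite P \<and> finite Bs \<and> card P = v \<and> card Bs = b \<and>
     (\<forall>B\<in>Bs. card (blk_pts P I B) = k) \<and>
     (\<forall>p\<in>P. card (pt_blks Bs I p) = r) \<and>
     v > k \<and> r < b"

definition pair_count :: "'b set \<Rightarrow> ('p \<Rightarrow> 'b \<Rightarrow> bool) \<Rightarrow> 'p \<Rightarrow> 'p \<Rightarrow> nat" where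
  "pair_count Bs I p q = card {B \<in> Bs. I p B \<and> I q B}"

definition SPBIBD ::
  "'p set \<Rightarrow> 'b set \<Rightarrow> ('p \<Rightarrow> 'b \<Rightarrow> bool) \<Rightarrow> nat \<Rightarrow> nat \<Rightarrow> nat \<Rightarrow> nat \<Rightarrow> nat \<Rightarrow> nat
     \<Rightarrow> nat \<Rightarrow> nat \<Rightarrow> bool" where
  "SPBIBD P Bs I v b r k lam1 lam2 s t \<longleftrightarrow>
     design P Bs I v b r k \<and>
     (\<forall>p\<in>P. \<forall>q\<in>P. p \<noteq> q \<longrightarrow> pair_count Bs I p q = lam1 \<or> pair_count Bs I p q = lam2) \<and>
     (\<forall>p\<in>P. \<forall>B\<in>Bs. I p B \<longrightarrow>
        card {q \<in> P. q \<noteq> p \<and> I q B \<and> pair_count Bs I p q = lam1} = s) \<and>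
     (\<forall>p\<in>P. \<forall>B\<in>Bs. \<not> I p B \<longrightarrow>
        card {q \<in> P. I q B \<and> pair_count Bs I p q = lam1} = t)"

definition quasi_symmetric ::
  "'p set \<Rightarrow> 'b set \<Rightarrow> ('p \<Rightarrow> 'b \<Rightarrow> bool) \<Rightarrow> nat \<Rightarrow> nat \<Rightarrow> bool" where
  "quasi_symmetric P Bs I x y \<longleftrightarrow>
     x < y \<and>
     (\<forall>B\<in>Bs. \<forall>C\<in>Bs. B \<noteq> C \<longrightarrow>
        card (blk_pts P I B \<inter> blk_pts P I C) = x \<or> card (blk_pts P I B \<inter> blk_pts P I C) = y) \<and>
     (\<exists>B\<in>Bs. \<exists>C\<in>Bs. B \<noteq> C \<and> card (blk_pts P I B \<inter> blk_pts P I C) = x) \<and>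
     (\<exists>B\<in>Bs. \<exists>C\<in>Bs. B \<noteq> C \<and> card (blk_pts P I B \<inter> blk_pts P I C) = y)"

definition partial_geometry ::
  "'p set \<Rightarrow> 'b set \<Rightarrow> ('p \<Rightarrow> 'b \<Rightarrow> bool) \<Rightarrow> nat \<Rightarrow> nat \<Rightarrow> nat \<Rightarrow> nat \<Rightarrow> nat \<Rightarrow> bool" where
  "partial_geometry P Bs I v b r k t' \<longleftrightarrow>
     design P Bs I v b r k \<and>
     (\<forall>p\<in>P. \<forall>q\<in>P. p \<noteq> q \<longrightarrow> pair_count Bs I p q \<le> 1) \<and>
     1 \<le> t' \<and> t' \<le> r \<and> t' \<le> k \<and>
     (\<forall>p\<in>P. \<forall>B\<in>Bs. \<not> I p B \<longrightarrow>
        card {C \<in> Bs. I p C \<and> (\<exists>q\<in>P. I q C \<and> I q B)} = t')"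

definition generalized_quadrangle ::
  "'p set \<Rightarrow> 'b set \<Rightarrow> ('p \<Rightarrow> 'b \<Rightarrow> bool) \<Rightarrow> nat \<Rightarrow> nat \<Rightarrow> nat \<Rightarrow> nat \<Rightarrow> bool" where
  "generalized_quadrangle P Bs I v b r k \<longleftrightarrow> partial_geometry P Bs I v b r k 1"

definition inc_graph_V :: "'p set \<Rightarrow> 'b set \<Rightarrow> ('p + 'b) set" where
  "inc_graph_V P Bs = Inl ` P \<union> Inr ` Bs"

fun inc_graph_E :: "'p set \<Rightarrow> 'b set \<Rightarrow> ('p \<Rightarrow> 'b \<Rightarrow> bool) \<Rightarrow> ('p + 'b) \<Rightarrow> ('p + 'b) \<Rightarrow> bool" where
  "inc_graph_E P Bs I (Inl p) (Inr B) = (p \<in> P \<and> B \<in> Bs \<and> I p B)"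
| "inc_graph_E P Bs I (Inr B) (Inl p) = (p \<in> P \<and> B \<in> Bs \<and> I p B)"
| "inc_graph_E P Bs I _ _ = False"

definition walk_of_len :: "('v \<Rightarrow> 'v \<Rightarrow> bool) \<Rightarrow> 'v \<Rightarrow> 'v \<Rightarrow> nat \<Rightarrow> bool" where
  "walk_of_len E u w n \<longleftrightarrow>
     (\<exists>xs. length xs = Suc n \<and> hd xs = u \<and> last xs = w \<and>
           (\<forall>i<n. E (xs ! i) (xs ! Suc i)))"

definition gdist :: "('v \<Rightarrow> 'v \<Rightarrow> bool) \<Rightarrow> 'v \<Rightarrow> 'v \<Rightarrow> nat" where
  "gdist E u w = (LEAST n. walk_of_len E u w n)"

definition sphere :: "'v set \<Rightarrow> ('v \<Rightarrow> 'v \<Rightarrow> bool) \<Rightarrow> 'v \<Rightarrow> nat \<Rightarrow> 'v set" where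
  "sphere V E u i = {w \<in> V. (\<exists>n. walk_of_len E u w n) \<and> gdist E u w = i}"

definition has_eccentricity :: "'v set \<Rightarrow> ('v \<Rightarrow> 'v \<Rightarrow> bool) \<Rightarrow> 'v \<Rightarrow> nat \<Rightarrow> bool" where
  "has_eccentricity V E u D \<longleftrightarrow>
     (\<forall>w\<in>V. \<exists>n. walk_of_len E u w n) \<and>
     (\<forall>w\<in>V. gdist E u w \<le> D) \<and> (\<exists>w\<in>V. gdist E u w = D)"

definition hom_cond :: "'v set \<Rightarrow> ('v \<Rightarrow> 'v \<Rightarrow> bool) \<Rightarrow> 'v set \<Rightarrow> nat \<Rightarrow> bool" where
  "hom_cond V E Y m \<longleftrightarrow>
     (\<forall>i. 1 \<le> i \<and> i \<le> m \<longrightarrow>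
       (\<exists>c. \<forall>x\<in>Y. \<forall>y\<in>sphere V E x 2. \<forall>z\<in>sphere V E x i \<inter> sphere V E y i.
          card (sphere V E x 1 \<inter> sphere V E y 1 \<inter> sphere V E z (i - 1)) = c))"

definition almost_2_hom :: "'v set \<Rightarrow> ('v \<Rightarrow> 'v \<Rightarrow> bool) \<Rightarrow> 'v set \<Rightarrow> bool" where
  "almost_2_hom V E Y \<longleftrightarrow>
     (\<exists>D\<ge>3. (\<forall>x\<in>Y. has_eccentricity V E x D) \<and> hom_cond V E Y (D - 2))"

definition two_hom :: "'v set \<Rightarrow> ('v \<Rightarrow> 'v \<Rightarrow> bool) \<Rightarrow> 'v set \<Rightarrow> bool" where
  "two_hom V E Y \<longleftrightarrow>
     (\<exists>D\<ge>3. (\<forall>x\<in>Y. has_eccentricity V E x D) \<and> hom_cond V E Y (D - 1))"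

end

(*
  Blocks meet in at most one point, and the flag condition with s = k - 1 forces lambda_1 = 1,
  so (for k >= 2) the design is a partial linear space in which, by t >= 1, every point off a
  block B is collinear with a point of B. Hence every block has eccentricity at most 4 in the
  incidence graph, and exactly 4 under the quadrangle axiom; disjoint blocks (x = 0) show it is
  never less than 4.

  Take two blocks B and C meeting in q. At distance i = 2, the blocks at distance 2 from
  both B and C all pass through q precisely when no point off a block lies on two blocks meeting
  it, i.e. precisely when the design is a generalized quadrangle. At distance i = 3 there are
  always points at distance 3 from B and C that are collinear with q and others that are not,
  so the homogeneity condition fails there. For k = 1 the incidence graph is disconnected and
  both sides of the equivalence are false.
*)
theory Submission
  imports Defs
begin

subsection \<open>Walks, distances and spheres\<close>

lemma walk_of_len_0 [simp]: "walk_of_len E u w 0 \<longleftrightarrow> u = w"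
proof
  assume "walk_of_len E u w 0"
  then obtain xs where "length xs = 1" "hd xs = u" "last xs = w"
    unfolding walk_of_len_def by auto
  then show "u = w" by (cases xs) auto
qed (auto simp: walk_of_len_def intro: exI[of _ "[u]"])

lemma walk_of_len_Suc: "walk_of_len E u w (Suc n) \<longleftrightarrow> (\<exists>m. walk_of_len E u m n \<and> E m w)"
proof
  assume "walk_of_len E u w (Suc n)"
  then obtain xs where xs: "length xs = Suc (Suc n)" "hd xs = u" "last xs = w"
    "\<forall>i<Suc n. E (xs ! i) (xs ! Suc i)" unfolding walk_of_len_def by blast
  have "walk_of_len E u (xs ! n) n"
    unfolding walk_of_len_def
  proof (intro exI[of _ "butlast xs"] conjI)
    show "hd (butlast xs) = u"
      using xs(1,2) by (cases xs) auto
    show "last (butlast xs) = xs ! n"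
      using xs(1) by (subst last_conv_nth) (auto simp: nth_butlast dest: arg_cong[of _ _ length])
  qed (use xs in \<open>simp_all add: nth_butlast\<close>)
  moreover have "E (xs ! n) w"
    using xs(1,3) xs(4)[rule_format, of n] last_conv_nth[of xs] by force
  ultimately show "\<exists>m. walk_of_len E u m n \<and> E m w" by blast
next
  assume "\<exists>m. walk_of_len E u m n \<and> E m w"
  then obtain m ys where ys: "length ys = Suc n" "hd ys = u" "last ys = m"
    "\<forall>i<n. E (ys ! i) (ys ! Suc i)" and "E m w"
    unfolding walk_of_len_def by blast
  have "ys ! n = m"
    using ys(1,3) last_conv_nth[of ys] by force
  then have "\<forall>i<Suc n. E ((ys @ [w]) ! i) ((ys @ [w]) ! Suc i)"
    using ys \<open>E m w\<close> by (auto simp: nth_append less_Suc_eq)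
  with ys show "walk_of_len E u w (Suc n)"
    unfolding walk_of_len_def by (intro exI[of _ "ys @ [w]"]) (auto simp: hd_append)
qed

lemma walk_of_len_closed:
  assumes "walk_of_len E u w n" "u \<in> S" "\<And>a c. a \<in> S \<Longrightarrow> E a c \<Longrightarrow> c \<in> S"
  shows "w \<in> S"
  using assms(1)
proof (induction n arbitrary: w)
  case (Suc n)
  then obtain m where "walk_of_len E u m n" "E m w" by (auto simp: walk_of_len_Suc)
  with Suc.IH show ?case by (blast intro: assms(3))
qed (simp add: assms(2))

lemma mem_sphere_iff:
  "w \<in> sphere V E u n \<longleftrightarrow> w \<in> V \<and> walk_of_len E u w n \<and> (\<forall>m<n. \<not> walk_of_len E u w m)"
proof
  assume "w \<in> sphere V E u n"
  then have w: "w \<in> V" "\<exists>n. walk_of_len E u w n" "(LEAST n. walk_of_len E u w n) = n"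
    unfolding sphere_def gdist_def by auto
  show "w \<in> V \<and> walk_of_len E u w n \<and> (\<forall>m<n. \<not> walk_of_len E u w m)"
    using w LeastI_ex[OF w(2)] not_less_Least[where P = "walk_of_len E u w"] by auto
next
  assume w: "w \<in> V \<and> walk_of_len E u w n \<and> (\<forall>m<n. \<not> walk_of_len E u w m)"
  then have "(LEAST n. walk_of_len E u w n) = n"
    by (intro Least_equality) (auto simp: not_less[symmetric])
  with w show "w \<in> sphere V E u n"
    unfolding sphere_def gdist_def by auto
qed

lemma sphere_0: "w \<in> V \<Longrightarrow> sphere V E w 0 = {w}"
  by (auto simp: mem_sphere_iff)

lemma reachable_if_has_eccentricity:
  "has_eccentricity V E u D \<Longrightarrow> w \<in> V \<Longrightarrow> \<exists>n. walk_of_len E u w n"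
  unfolding has_eccentricity_def by blast

lemma not_2_hom_if_unreachable:
  assumes "x \<in> Y" "w \<in> V" "\<forall>n. \<not> walk_of_len E x w n"
  shows "\<not> almost_2_hom V E Y" "\<not> two_hom V E Y"
  using assms reachable_if_has_eccentricity unfolding almost_2_hom_def two_hom_def by metis+

definition homogeneous_at :: "'v set \<Rightarrow> ('v \<Rightarrow> 'v \<Rightarrow> bool) \<Rightarrow> 'v set \<Rightarrow> nat \<Rightarrow> bool" where
  "homogeneous_at V E Y i \<longleftrightarrow>
     (\<exists>c. \<forall>x\<in>Y. \<forall>y\<in>sphere V E x 2. \<forall>z\<in>sphere V E x i \<inter> sphere V E y i.
        card (sphere V E x 1 \<inter> sphere V E y 1 \<inter> sphere V E z (i - 1)) = c)"

lemma hom_cond_iff_homogeneous_at: "hom_cond V E Y m \<longleftrightarrow> (\<forall>i\<in>{1..m}. homogeneous_at V E Y i)"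
  unfolding hom_cond_def homogeneous_at_def by auto

lemma homogeneous_at_1: "homogeneous_at V E Y 1"
  unfolding homogeneous_at_def
proof (intro exI[of _ 1] ballI)
  fix x y z assume z: "z \<in> sphere V E x 1 \<inter> sphere V E y 1"
  then have "sphere V E z 0 = {z}"
    by (intro sphere_0) (simp add: sphere_def)
  with z show "card (sphere V E x 1 \<inter> sphere V E y 1 \<inter> sphere V E z (1 - 1)) = 1"
    by (simp add: Int_absorb1)
qed

lemma not_homogeneous_atI:
  assumes "x \<in> Y" "y \<in> sphere V E x 2"
    and "z \<in> sphere V E x i \<inter> sphere V E y i" "z' \<in> sphere V E x i \<inter> sphere V E y i"
    and "card (sphere V E x 1 \<inter> sphere V E y 1 \<inter> sphere V E z (i - 1))
       \<noteq> card (sphere V E x 1 \<inter> sphere V E y 1 \<inter> sphere V E z' (i - 1))"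
  shows "\<not> homogeneous_at V E Y i"
  using assms unfolding homogeneous_at_def by metis

lemma SPBIBD_D:
  assumes "SPBIBD P Bs I v b r k lam1 lam2 s t"
  shows "design P Bs I v b r k"
    and "\<lbrakk>p \<in> P; B \<in> Bs; I p B\<rbrakk> \<Longrightarrow>
           card {q \<in> P. q \<noteq> p \<and> I q B \<and> pair_count Bs I p q = lam1} = s"
    and "\<lbrakk>p \<in> P; B \<in> Bs; \<not> I p B\<rbrakk> \<Longrightarrow> card {q \<in> P. I q B \<and> pair_count Bs I p q = lam1} = t"
  using assms unfolding SPBIBD_def by blast+

lemma design_D:
  assumes "design P Bs I v b r k"
  shows "finite P" "finite Bs" "k < card P"
    and "B \<in> Bs \<Longrightarrow> card (blk_pts P I B) = k"
    and "p \<in> P \<Longrightarrow> card (pt_blks Bs I p) = r"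
  using assms unfolding design_def by auto

lemma design_ex_point_off_block:
  assumes "design P Bs I v b r k" "B \<in> Bs"
  shows "\<exists>p\<in>P. \<not> I p B"
proof (rule ccontr)
  assume "\<not> (\<exists>p\<in>P. \<not> I p B)"
  then have "P = blk_pts P I B"
    by (auto simp: blk_pts_def)
  then show False
    using design_D(3)[OF assms(1)] design_D(4)[OF assms] by simp
qed

lemma quasi_symmetric_0_1_block_unique:
  assumes "quasi_symmetric P Bs I 0 1" "finite P"
    and "p \<in> P" "q \<in> P" "p \<noteq> q" "B \<in> Bs" "C \<in> Bs" "I p B" "I q B" "I p C" "I q C"
  shows "B = C"
proof (rule ccontr)
  assume "B \<noteq> C"
  then have "card (blk_pts P I B \<inter> blk_pts P I C) \<le> 1"
    using assms(1,6,7) unfolding quasi_symmetric_def by fastforce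
  moreover have "{p, q} \<subseteq> blk_pts P I B \<inter> blk_pts P I C"
    using assms(3,4,8-11) by (auto simp: blk_pts_def)
  then have "card {p, q} \<le> card (blk_pts P I B \<inter> blk_pts P I C)"
    using assms(2) by (intro card_mono) (auto simp: blk_pts_def)
  ultimately show False
    using \<open>p \<noteq> q\<close> by simp
qed

lemma quasi_symmetric_0_1_ex_disjoint_blocks:
  assumes "quasi_symmetric P Bs I 0 1" "finite P"
  obtains B C where "B \<in> Bs" "C \<in> Bs" "\<forall>q\<in>P. \<not> (I q B \<and> I q C)"
proof -
  obtain B C where "B \<in> Bs" "C \<in> Bs" "card (blk_pts P I B \<inter> blk_pts P I C) = 0"
    using assms(1) unfolding quasi_symmetric_def by blast
  with assms(2) show ?thesis
    using that by (auto simp: blk_pts_def)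
qed

lemma quasi_symmetric_0_1_ex_flag:
  assumes "quasi_symmetric P Bs I 0 1"
  obtains p B where "p \<in> P" "B \<in> Bs" "I p B"
proof -
  obtain B C where "B \<in> Bs" "card (blk_pts P I B \<inter> blk_pts P I C) = 1"
    using assms unfolding quasi_symmetric_def by blast
  then show ?thesis
    using that card_1_singletonE by (metis Int_iff blk_pts_def insertI1 mem_Collect_eq)
qed

lemma Inl_mem_inc_graph_V [simp]: "Inl p \<in> inc_graph_V P Bs \<longleftrightarrow> p \<in> P"
  by (auto simp: inc_graph_V_def)

lemma Inr_mem_inc_graph_V [simp]: "Inr B \<in> inc_graph_V P Bs \<longleftrightarrow> B \<in> Bs"
  by (auto simp: inc_graph_V_def)

locale incidence_structure =
  fixes P :: "'p set" and Bs :: "'b set" and I :: "'p \<Rightarrow> 'b \<Rightarrow> bool"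
begin

abbreviation \<Gamma> :: "'p + 'b \<Rightarrow> nat \<Rightarrow> ('p + 'b) set" where
  "\<Gamma> \<equiv> sphere (inc_graph_V P Bs) (inc_graph_E P Bs I)"

lemma walk_of_len_Inl_Suc [simp]:
  "walk_of_len (inc_graph_E P Bs I) u (Inl p) (Suc n) \<longleftrightarrow>
     (\<exists>B. walk_of_len (inc_graph_E P Bs I) u (Inr B) n \<and> p \<in> P \<and> B \<in> Bs \<and> I p B)"
  unfolding walk_of_len_Suc by (rule iffI, clarify, case_tac m) auto

lemma walk_of_len_Inr_Suc [simp]:
  "walk_of_len (inc_graph_E P Bs I) u (Inr B) (Suc n) \<longleftrightarrow>
     (\<exists>p. walk_of_len (inc_graph_E P Bs I) u (Inl p) n \<and> p \<in> P \<and> B \<in> Bs \<and> I p B)"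
  unfolding walk_of_len_Suc by (rule iffI, clarify, case_tac m) auto

lemmas sphere_simps = mem_sphere_iff numeral_eq_Suc One_nat_def All_less_Suc

lemma Inl_mem_sphere_Inr_1:
  "B \<in> Bs \<Longrightarrow> Inl p \<in> \<Gamma> (Inr B) 1 \<longleftrightarrow> p \<in> P \<and> I p B"
  by (auto simp: sphere_simps)

lemma sphere_Inr_1: "B \<in> Bs \<Longrightarrow> \<Gamma> (Inr B) 1 = Inl ` blk_pts P I B"
  by (rule set_eqI, case_tac x) (auto simp: sphere_simps blk_pts_def)

lemma mem_sphere_Inr_2:
  "B \<in> Bs \<Longrightarrow> w \<in> \<Gamma> (Inr B) 2 \<longleftrightarrow> (\<exists>C. w = Inr C \<and> C \<in> Bs \<and> C \<noteq> B \<and> (\<exists>q\<in>P. I q B \<and> I q C))"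
  by (cases w) (auto simp: sphere_simps)

lemma Inl_mem_sphere_Inr_3:
  "B \<in> Bs \<Longrightarrow> Inl z \<in> \<Gamma> (Inr B) 3 \<longleftrightarrow> z \<in> P \<and> \<not> I z B \<and> (\<exists>C\<in>Bs. \<exists>q\<in>P. I q B \<and> I q C \<and> I z C)"
  by (auto simp: sphere_simps)

lemma Inl_mem_sphere_Inl_2:
  "z \<in> P \<Longrightarrow> Inl q \<in> \<Gamma> (Inl z) 2 \<longleftrightarrow> q \<in> P \<and> q \<noteq> z \<and> (\<exists>C\<in>Bs. I z C \<and> I q C)"
  by (auto simp: sphere_simps)

lemma Inr_mem_sphere_Inr_4I:
  assumes "B \<in> Bs" "C \<in> Bs" "\<forall>q\<in>P. \<not> (I q B \<and> I q C)"
    and "p \<in> P" "q \<in> P" "W \<in> Bs" "I q B" "I q W" "I p W" "I p C"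
  shows "Inr C \<in> \<Gamma> (Inr B) 4"
  using assms by (auto simp: sphere_simps)

definition meeting_blocks :: "'p \<Rightarrow> 'b \<Rightarrow> 'b set" where
  "meeting_blocks p B = {C \<in> Bs. I p C \<and> (\<exists>q\<in>P. I q C \<and> I q B)}"

definition gq_axiom :: bool where
  "gq_axiom \<longleftrightarrow> (\<forall>p\<in>P. \<forall>B\<in>Bs. \<not> I p B \<longrightarrow> card (meeting_blocks p B) = 1)"

lemma ex_block_through_avoiding:
  assumes "finite X" "card X < card (pt_blks Bs I p)"
  obtains C where "C \<in> Bs" "I p C" "C \<notin> X"
proof -
  have "\<not> pt_blks Bs I p \<subseteq> X"
  proof
    assume "pt_blks Bs I p \<subseteq> X"
    then have "card (pt_blks Bs I p) \<le> card X"
      using assms(1) by (rule card_mono[rotated])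
    with assms(2) show False by simp
  qed
  then show ?thesis
    using that by (auto simp: pt_blks_def)
qed

lemma eq_if_blocks_singletons:
  assumes "\<forall>C\<in>Bs. card (blk_pts P I C) = 1"
    and "C \<in> Bs" "q \<in> P" "q' \<in> P" "I q C" "I q' C"
  shows "q = q'"
proof -
  obtain a where "blk_pts P I C = {a}"
    using assms(1,2) card_1_singletonE by blast
  moreover have "q \<in> blk_pts P I C" "q' \<in> blk_pts P I C"
    using assms by (simp_all add: blk_pts_def)
  ultimately show ?thesis by simp
qed

lemma unreachable_if_blocks_singletons:
  assumes singletons: "\<forall>C\<in>Bs. card (blk_pts P I C) = 1"
    and "B \<in> Bs" "p \<in> P" "\<not> I p B"
  shows "\<not> walk_of_len (inc_graph_E P Bs I) (Inr B) (Inl p) n"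
proof
  let ?S = "Inr ` {C \<in> Bs. \<not> I p C} \<union> Inl ` (P - {p})"
  assume "walk_of_len (inc_graph_E P Bs I) (Inr B) (Inl p) n"
  then have "Inl p \<in> ?S"
  proof (rule walk_of_len_closed)
    fix a c assume "a \<in> ?S" "inc_graph_E P Bs I a c"
    then show "c \<in> ?S"
      using eq_if_blocks_singletons[OF singletons] \<open>p \<in> P\<close> by (cases a; cases c) auto
  qed (use assms in auto)
  then show False by auto
qed

lemma blocks_singletons_not_2_hom:
  assumes "\<forall>C\<in>Bs. card (blk_pts P I C) = 1" "B \<in> Bs" "p \<in> P" "\<not> I p B"
  shows "\<not> almost_2_hom (inc_graph_V P Bs) (inc_graph_E P Bs I) (Inr ` Bs)"
    and "\<not> two_hom (inc_graph_V P Bs) (inc_graph_E P Bs I) (Inr ` Bs)"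
  using not_2_hom_if_unreachable[of "Inr B" "Inr ` Bs" "Inl p" "inc_graph_V P Bs"]
    unreachable_if_blocks_singletons[OF assms] assms(2,3) by simp_all

lemma meeting_blocks_empty_if_blocks_singletons:
  assumes "\<forall>C\<in>Bs. card (blk_pts P I C) = 1" "p \<in> P" "\<not> I p B"
  shows "meeting_blocks p B = {}"
  using eq_if_blocks_singletons[OF assms(1)] assms(2,3)
  unfolding meeting_blocks_def by blast

lemma gq_axiom_if_generalized_quadrangle:
  "generalized_quadrangle P Bs I v b r k \<Longrightarrow> gq_axiom"
  unfolding generalized_quadrangle_def partial_geometry_def gq_axiom_def meeting_blocks_def
  by blast

lemma blocks_singletons_not_generalized_quadrangle:
  assumes "\<forall>C\<in>Bs. card (blk_pts P I C) = 1" "B \<in> Bs" "p \<in> P" "\<not> I p B"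
  shows "\<not> generalized_quadrangle P Bs I v b r k"
proof
  assume "generalized_quadrangle P Bs I v b r k"
  then have "card (meeting_blocks p B) = 1"
    using gq_axiom_if_generalized_quadrangle assms(2-4) unfolding gq_axiom_def by blast
  then show False
    using meeting_blocks_empty_if_blocks_singletons[OF assms(1,3,4)] by simp
qed

end

subsection \<open>Partial linear spaces\<close>

locale partial_linear_space = incidence_structure +
  assumes block_unique:
      "\<lbrakk>p \<in> P; q \<in> P; p \<noteq> q; B \<in> Bs; C \<in> Bs; I p B; I q B; I p C; I q C\<rbrakk> \<Longrightarrow> B = C"
    and two_le_card_blk_pts: "B \<in> Bs \<Longrightarrow> 2 \<le> card (blk_pts P I B)"
begin

lemma ex_other_point_on_block:
  assumes "B \<in> Bs"
  obtains q where "q \<in> P" "I q B" "q \<noteq> p"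
proof -
  have "\<not> blk_pts P I B \<subseteq> {p}"
  proof
    assume "blk_pts P I B \<subseteq> {p}"
    then have "card (blk_pts P I B) \<le> 1"
      using card_mono[of "{p}"] by simp
    with two_le_card_blk_pts[OF assms] show False by simp
  qed
  then show ?thesis
    using that by (auto simp: blk_pts_def)
qed

lemma blk_pts_Int_eq_singleton:
  assumes "B \<in> Bs" "C \<in> Bs" "B \<noteq> C" "q \<in> P" "I q B" "I q C"
  shows "blk_pts P I B \<inter> blk_pts P I C = {q}"
proof (rule set_eqI)
  fix x
  show "x \<in> blk_pts P I B \<inter> blk_pts P I C \<longleftrightarrow> x \<in> {q}"
    using assms block_unique[of x q B C] by (auto simp: blk_pts_def)
qed

lemma common_neighbours_Inr:
  assumes "B \<in> Bs" "C \<in> Bs" "B \<noteq> C" "q \<in> P" "I q B" "I q C"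
  shows "\<Gamma> (Inr B) 1 \<inter> \<Gamma> (Inr C) 1 = {Inl q}"
  unfolding sphere_Inr_1[OF assms(1)] sphere_Inr_1[OF assms(2)] image_Int[OF inj_Inl, symmetric]
  using blk_pts_Int_eq_singleton[OF assms] by simp

lemma card_common_neighbours_Inr:
  assumes "B \<in> Bs" "C \<in> Bs" "B \<noteq> C" "q \<in> P" "I q B" "I q C" "D \<in> Bs"
  shows "card (\<Gamma> (Inr B) 1 \<inter> \<Gamma> (Inr C) 1 \<inter> \<Gamma> (Inr D) 1) = (if I q D then 1 else 0)"
proof -
  have "\<Gamma> (Inr B) 1 \<inter> \<Gamma> (Inr C) 1 \<inter> \<Gamma> (Inr D) 1 = (if I q D then {Inl q} else {})"
    unfolding common_neighbours_Inr[OF assms(1-6)] sphere_Inr_1[OF assms(7)]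
    using assms(4) by (auto simp: blk_pts_def)
  then show ?thesis
    by simp
qed

lemma pair_count_eq_1:
  assumes "p \<in> P" "q \<in> P" "p \<noteq> q" "C \<in> Bs" "I p C" "I q C"
  shows "pair_count Bs I p q = 1"
proof -
  have "{B \<in> Bs. I p B \<and> I q B} = {C}"
  proof (rule set_eqI)
    fix B
    show "B \<in> {B \<in> Bs. I p B \<and> I q B} \<longleftrightarrow> B \<in> {C}"
      using assms block_unique[of p q B C] by auto
  qed
  then show ?thesis
    by (simp add: pair_count_def)
qed

lemma SPBIBD_lam1_eq_1:
  assumes spbibd: "SPBIBD P Bs I v b r k lam1 lam2 (k - 1) t" and "B \<in> Bs"
  shows "lam1 = 1"
proof -
  note des = SPBIBD_D(1)[OF spbibd]
  obtain q where q: "q \<in> P" "I q B"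
    using ex_other_point_on_block[OF assms(2)] by blast
  obtain q' where q': "q' \<in> P" "I q' B" "q' \<noteq> q"
    using ex_other_point_on_block[OF assms(2)] by blast
  let ?A = "{q' \<in> P. q' \<noteq> q \<and> I q' B \<and> pair_count Bs I q q' = lam1}"
  have "finite (blk_pts P I B - {q})"
    using design_D(1)[OF des] by (simp add: blk_pts_def)
  moreover have "?A \<subseteq> blk_pts P I B - {q}"
    by (auto simp: blk_pts_def)
  moreover have "card ?A = card (blk_pts P I B - {q})"
    using SPBIBD_D(2)[OF spbibd q(1) assms(2) q(2)] design_D(1)[OF des] design_D(4)[OF des assms(2)] q
    by (simp add: blk_pts_def)
  ultimately have "?A = blk_pts P I B - {q}"
    by (rule card_subset_eq)
  then have "pair_count Bs I q q' = lam1"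
    using q' by (auto simp: blk_pts_def)
  moreover have "pair_count Bs I q q' = 1"
    using pair_count_eq_1[OF q(1) q'(1) q'(3)[symmetric] assms(2) q(2) q'(2)] .
  ultimately show ?thesis by simp
qed

lemma SPBIBD_nonflag_joinable:
  assumes spbibd: "SPBIBD P Bs I v b r k lam1 lam2 (k - 1) t"
    and "2 \<le> r" "B0 \<in> Bs" "p \<in> P" "B \<in> Bs" "\<not> I p B"
  shows "\<exists>q\<in>P. \<exists>C\<in>Bs. I q B \<and> I q C \<and> I p C"
proof -
  note des = SPBIBD_D(1)[OF spbibd]
  have lam1: "lam1 = 1"
    using SPBIBD_lam1_eq_1[OF spbibd \<open>B0 \<in> Bs\<close>] .
  have "t \<noteq> 0"
  proof -
    obtain q where q: "q \<in> P" "I q B0"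
      using ex_other_point_on_block[OF \<open>B0 \<in> Bs\<close>] by blast
    obtain C where C: "C \<in> Bs" "I q C" "C \<notin> {B0}"
      using ex_block_through_avoiding[of "{B0}" q] design_D(5)[OF des q(1)] \<open>2 \<le> r\<close> by auto
    obtain p' where p': "p' \<in> P" "I p' C" "p' \<noteq> q"
      using ex_other_point_on_block[OF C(1)] by blast
    have "\<not> I p' B0"
      using block_unique[OF p'(1) q(1) p'(3) \<open>B0 \<in> Bs\<close> C(1) _ q(2) p'(2) C(2)] C(3) by blast
    let ?S = "{q \<in> P. I q B0 \<and> pair_count Bs I p' q = lam1}"
    have "card ?S = t"
      using SPBIBD_D(3)[OF spbibd p'(1) \<open>B0 \<in> Bs\<close> \<open>\<not> I p' B0\<close>] .
    moreover have "q \<in> ?S"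
      using q lam1 pair_count_eq_1[OF p'(1) q(1) p'(3) C(1) p'(2) C(2)] by simp
    moreover have "finite ?S"
      using design_D(1)[OF des] by simp
    ultimately show ?thesis
      using card_gt_0_iff[of ?S] by auto
  qed
  moreover have "card {q \<in> P. I q B \<and> pair_count Bs I p q = lam1} = t"
    using SPBIBD_D(3)[OF spbibd assms(4-6)] .
  ultimately have "{q \<in> P. I q B \<and> pair_count Bs I p q = lam1} \<noteq> {}"
    by force
  then obtain q where q: "q \<in> P" "I q B" "pair_count Bs I p q = 1"
    using lam1 by blast
  obtain C where "{C \<in> Bs. I p C \<and> I q C} = {C}"
    using q(3) card_1_singletonE unfolding pair_count_def by blast
  then show ?thesis
    using q by blast
qed

lemma generalized_quadrangle_iff_gq_axiom:
  assumes "design P Bs I v b r k" "1 \<le> r" "1 \<le> k"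
  shows "generalized_quadrangle P Bs I v b r k \<longleftrightarrow> gq_axiom"
proof
  assume gq: gq_axiom
  have "pair_count Bs I p q \<le> 1" if "p \<in> P" "q \<in> P" "p \<noteq> q" for p q
  proof -
    have "card {B \<in> Bs. I p B \<and> I q B} \<le> Suc 0"
      using block_unique[OF that] design_D(2)[OF assms(1)] by (subst card_le_Suc0_iff_eq) auto
    then show ?thesis
      by (simp add: pair_count_def)
  qed
  with gq assms show "generalized_quadrangle P Bs I v b r k"
    unfolding generalized_quadrangle_def partial_geometry_def gq_axiom_def meeting_blocks_def
    by simp
qed (rule gq_axiom_if_generalized_quadrangle)

end

subsection \<open>The generalized quadrangle axiom and homogeneity\<close>

locale joinable_space = partial_linear_space +
  assumes three_le_card_pt_blks: "p \<in> P \<Longrightarrow> 3 \<le> card (pt_blks Bs I p)"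
    and nonflag_joinable: "\<lbrakk>p \<in> P; B \<in> Bs; \<not> I p B\<rbrakk> \<Longrightarrow> \<exists>q\<in>P. \<exists>C\<in>Bs. I q B \<and> I q C \<and> I p C"
begin

lemma ex_third_block:
  assumes "p \<in> P"
  obtains C where "C \<in> Bs" "I p C" "C \<noteq> B1" "C \<noteq> B2"
proof -
  have "card {B1, B2} \<le> 2"
    by (cases "B1 = B2") simp_all
  then have "card {B1, B2} < card (pt_blks Bs I p)"
    using three_le_card_pt_blks[OF assms] by simp
  then show ?thesis
    using ex_block_through_avoiding[of "{B1, B2}" p] that by auto
qed

lemma Inl_mem_sphere_Inr_3_iff:
  "B \<in> Bs \<Longrightarrow> p \<in> P \<Longrightarrow> Inl p \<in> \<Gamma> (Inr B) 3 \<longleftrightarrow> \<not> I p B"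
  using nonflag_joinable Inl_mem_sphere_Inr_3 by blast

lemma Inr_mem_sphere_Inr_4:
  assumes "B \<in> Bs" "C \<in> Bs" "\<forall>q\<in>P. \<not> (I q B \<and> I q C)"
  shows "Inr C \<in> \<Gamma> (Inr B) 4"
proof -
  obtain p where p: "p \<in> P" "I p C"
    using ex_other_point_on_block[OF assms(2)] by blast
  then obtain q W where "q \<in> P" "W \<in> Bs" "I q B" "I q W" "I p W"
    using nonflag_joinable[OF p(1) assms(1)] assms(3) by blast
  with assms p show ?thesis
    by (intro Inr_mem_sphere_Inr_4I)
qed

lemma four_le_eccentricity:
  assumes "B \<in> Bs" "C \<in> Bs" "\<forall>q\<in>P. \<not> (I q B \<and> I q C)"
    and "has_eccentricity (inc_graph_V P Bs) (inc_graph_E P Bs I) (Inr B) D"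
  shows "4 \<le> D"
proof -
  have "gdist (inc_graph_E P Bs I) (Inr B) (Inr C) = 4"
    using Inr_mem_sphere_Inr_4[OF assms(1-3)] by (simp add: sphere_def)
  moreover have "gdist (inc_graph_E P Bs I) (Inr B) (Inr C) \<le> D"
    using assms(2,4) unfolding has_eccentricity_def by simp
  ultimately show ?thesis by simp
qed

lemma ex_sphere_Inr_le_4:
  assumes "B \<in> Bs" "w \<in> inc_graph_V P Bs"
  shows "\<exists>n\<le>4. w \<in> \<Gamma> (Inr B) n"
proof (cases w)
  case (Inl p)
  then have "w \<in> \<Gamma> (Inr B) 1 \<or> w \<in> \<Gamma> (Inr B) 3"
    using assms Inl_mem_sphere_Inr_1 Inl_mem_sphere_Inr_3_iff by auto
  moreover have "(1::nat) \<le> 4" "(3::nat) \<le> 4"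
    by simp_all
  ultimately show ?thesis
    by blast
next
  case (Inr C)
  then have "w \<in> \<Gamma> (Inr B) 0 \<or> w \<in> \<Gamma> (Inr B) 2 \<or> w \<in> \<Gamma> (Inr B) 4"
    using assms Inr_mem_sphere_Inr_4[OF assms(1), of C]
    by (auto simp: sphere_0 mem_sphere_Inr_2[OF assms(1)])
  moreover have "(0::nat) \<le> 4" "(2::nat) \<le> 4"
    by simp_all
  ultimately show ?thesis
    by blast
qed

lemma meeting_blocks_eq:
  assumes "gq_axiom" "p \<in> P" "B \<in> Bs" "\<not> I p B"
    and "C \<in> meeting_blocks p B" "C' \<in> meeting_blocks p B"
  shows "C = C'"
proof -
  have "card (meeting_blocks p B) = 1"
    using assms(1-4) unfolding gq_axiom_def by blast
  then show ?thesis
    using assms(5,6) card_1_singletonE by (metis singletonD)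
qed

lemma gq_axiomI:
  assumes "\<And>p B C C'. \<lbrakk>p \<in> P; B \<in> Bs; \<not> I p B; C \<in> meeting_blocks p B; C' \<in> meeting_blocks p B\<rbrakk>
    \<Longrightarrow> C = C'"
  shows "gq_axiom"
  unfolding gq_axiom_def
proof (intro ballI impI)
  fix p B assume nonflag: "p \<in> P" "B \<in> Bs" "\<not> I p B"
  then obtain C where "C \<in> meeting_blocks p B"
    using nonflag_joinable unfolding meeting_blocks_def by blast
  then have "meeting_blocks p B = {C}"
    using assms[OF nonflag] by blast
  then show "card (meeting_blocks p B) = 1"
    by simp
qed

lemma gq_ex_disjoint_block:
  assumes "gq_axiom" "B \<in> Bs"
  obtains C where "C \<in> Bs" "\<forall>q\<in>P. \<not> (I q B \<and> I q C)"
proof -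
  obtain q where q: "q \<in> P" "I q B"
    using ex_other_point_on_block[OF assms(2)] by blast
  obtain C' where C': "C' \<in> Bs" "I q C'" "C' \<noteq> B"
    using ex_third_block[OF q(1)] by metis
  obtain p where p: "p \<in> P" "I p C'" "p \<noteq> q"
    using ex_other_point_on_block[OF C'(1)] by blast
  have "\<not> I p B"
    using block_unique[OF p(1) q(1) p(3) assms(2) C'(1) _ q(2) p(2) C'(2)] C'(3) by blast
  then have card_1: "card (meeting_blocks p B) = 1"
    using assms p(1) unfolding gq_axiom_def by blast
  then have "card (meeting_blocks p B) < card (pt_blks Bs I p)"
    using three_le_card_pt_blks[OF p(1)] by simp
  moreover have "finite (meeting_blocks p B)"
    using card_1 card.infinite by fastforce
  ultimately obtain C where "C \<in> Bs" "I p C" "C \<notin> meeting_blocks p B"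
    using ex_block_through_avoiding by blast
  then show ?thesis
    using that p(1) unfolding meeting_blocks_def by blast
qed

lemma gq_has_eccentricity_4:
  assumes "gq_axiom" "B \<in> Bs"
  shows "has_eccentricity (inc_graph_V P Bs) (inc_graph_E P Bs I) (Inr B) 4"
  unfolding has_eccentricity_def
proof (intro conjI ballI)
  fix w assume "w \<in> inc_graph_V P Bs"
  then obtain n where "n \<le> 4" "w \<in> \<Gamma> (Inr B) n"
    using ex_sphere_Inr_le_4[OF assms(2)] by blast
  then show "\<exists>n. walk_of_len (inc_graph_E P Bs I) (Inr B) w n"
    and "gdist (inc_graph_E P Bs I) (Inr B) w \<le> 4"
    by (auto simp: sphere_def)
next
  obtain C where "C \<in> Bs" "\<forall>q\<in>P. \<not> (I q B \<and> I q C)"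
    using gq_ex_disjoint_block[OF assms] .
  then have "Inr C \<in> \<Gamma> (Inr B) 4"
    using Inr_mem_sphere_Inr_4[OF assms(2)] by blast
  then show "\<exists>w\<in>inc_graph_V P Bs. gdist (inc_graph_E P Bs I) (Inr B) w = 4"
    unfolding sphere_def by blast
qed

lemma homogeneous_at_2_imp_gq_axiom:
  assumes "homogeneous_at (inc_graph_V P Bs) (inc_graph_E P Bs I) (Inr ` Bs) 2"
  shows "gq_axiom"
proof (rule gq_axiomI, rule ccontr)
  fix p B C1 C2
  assume nonflag: "p \<in> P" "B \<in> Bs" "\<not> I p B"
    and "C1 \<in> meeting_blocks p B" "C2 \<in> meeting_blocks p B" "C1 \<noteq> C2"
  then obtain a1 a2 where C1: "C1 \<in> Bs" "I p C1" "a1 \<in> P" "I a1 C1" "I a1 B"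
    and C2: "C2 \<in> Bs" "I p C2" "a2 \<in> P" "I a2 C2" "I a2 B"
    unfolding meeting_blocks_def by blast
  have "B \<noteq> C1" "B \<noteq> C2" "p \<noteq> a1"
    using nonflag C1 C2 by auto
  obtain C3 where C3: "C3 \<in> Bs" "I a1 C3" "C3 \<noteq> B" "C3 \<noteq> C1"
    using ex_third_block[OF C1(3)] by metis
  \<comment> \<open>C3 and C2 both lie at distance 2 from B and from C1, but only C3 passes through
    the common point a1 of B and C1.\<close>
  have "\<not> I a1 C2"
    using block_unique[OF nonflag(1) C1(3) \<open>p \<noteq> a1\<close> C1(1) C2(1) C1(2,4) C2(2)] \<open>C1 \<noteq> C2\<close> by blast
  have "Inr C1 \<in> \<Gamma> (Inr B) 2"
    using C1 \<open>B \<noteq> C1\<close> by (auto simp: mem_sphere_Inr_2[OF nonflag(2)])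
  moreover have "Inr C3 \<in> \<Gamma> (Inr B) 2 \<inter> \<Gamma> (Inr C1) 2"
    using C1 C3 by (auto simp: mem_sphere_Inr_2[OF nonflag(2)] mem_sphere_Inr_2[OF C1(1)])
  moreover have "Inr C2 \<in> \<Gamma> (Inr B) 2 \<inter> \<Gamma> (Inr C1) 2"
    using nonflag(1) C1 C2 \<open>B \<noteq> C2\<close> \<open>C1 \<noteq> C2\<close>
    by (auto simp: mem_sphere_Inr_2[OF nonflag(2)] mem_sphere_Inr_2[OF C1(1)])
  moreover have "card (\<Gamma> (Inr B) 1 \<inter> \<Gamma> (Inr C1) 1 \<inter> \<Gamma> (Inr C3) (2 - 1))
      \<noteq> card (\<Gamma> (Inr B) 1 \<inter> \<Gamma> (Inr C1) 1 \<inter> \<Gamma> (Inr C2) (2 - 1))"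
    using card_common_neighbours_Inr[OF nonflag(2) C1(1) \<open>B \<noteq> C1\<close> C1(3,5,4)] C2(1) C3(1,2)
      \<open>\<not> I a1 C2\<close> by simp
  ultimately have "\<not> homogeneous_at (inc_graph_V P Bs) (inc_graph_E P Bs I) (Inr ` Bs) 2"
    using nonflag(2) by (intro not_homogeneous_atI) auto
  with assms show False
    by blast
qed

lemma gq_axiom_imp_homogeneous_at_2:
  assumes gq: "gq_axiom"
  shows "homogeneous_at (inc_graph_V P Bs) (inc_graph_E P Bs I) (Inr ` Bs) 2"
  unfolding homogeneous_at_def
proof (intro exI[of _ 1] ballI)
  fix x y z
  assume "x \<in> Inr ` Bs" "y \<in> \<Gamma> x 2" "z \<in> \<Gamma> x 2 \<inter> \<Gamma> y 2"
  then obtain B C C' q a b where B: "x = Inr B" "B \<in> Bs"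
    and C: "y = Inr C" "C \<in> Bs" "C \<noteq> B" "q \<in> P" "I q B" "I q C"
    and C': "z = Inr C'" "C' \<in> Bs" "C' \<noteq> B" "a \<in> P" "I a B" "I a C'"
      "C' \<noteq> C" "b \<in> P" "I b C" "I b C'"
    by (auto simp: mem_sphere_Inr_2)
  have "I q C'"
  proof (rule ccontr)
    assume "\<not> I q C'"
    then have "a \<noteq> q"
      using C' by blast
    then have "\<not> I a C"
      using block_unique[OF C'(4) C(4) _ B(2) C(2) C'(5) C(5) _ C(6)] C(3) by blast
    \<comment> \<open>B and C' are two blocks through a meeting C, so they coincide.\<close>
    then have "B = C'"
      using meeting_blocks_eq[OF gq C'(4) C(2)] C C' B(2) unfolding meeting_blocks_def by blast
    with C' show False
      by blast
  qed
  then show "card (\<Gamma> x 1 \<inter> \<Gamma> y 1 \<inter> \<Gamma> z (2 - 1)) = 1"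
    using card_common_neighbours_Inr[OF B(2) C(2) C(3)[symmetric] C(4-6) C'(2)] B C C' by simp
qed

lemma gq_axiom_not_homogeneous_at_3:
  assumes gq: "gq_axiom" and "B \<in> Bs"
  shows "\<not> homogeneous_at (inc_graph_V P Bs) (inc_graph_E P Bs I) (Inr ` Bs) 3"
proof -
  obtain q where q: "q \<in> P" "I q B"
    using ex_other_point_on_block[OF assms(2)] by blast
  obtain C where C: "C \<in> Bs" "I q C" "C \<noteq> B"
    using ex_third_block[OF q(1)] by metis
  have common: "\<Gamma> (Inr B) 1 \<inter> \<Gamma> (Inr C) 1 = {Inl q}"
    using common_neighbours_Inr[OF assms(2) C(1) C(3)[symmetric] q(1,2) C(2)] .
  \<comment> \<open>Both z1 and z2 are at distance 3 from B and from C, but only z1 is collinear with q.\<close>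
  obtain z1 where z1: "Inl z1 \<in> \<Gamma> (Inr B) 3 \<inter> \<Gamma> (Inr C) 3" "Inl q \<in> \<Gamma> (Inl z1) 2"
  proof -
    obtain W where W: "W \<in> Bs" "I q W" "W \<noteq> B" "W \<noteq> C"
      using ex_third_block[OF q(1)] by metis
    obtain z1 where z1: "z1 \<in> P" "I z1 W" "z1 \<noteq> q"
      using ex_other_point_on_block[OF W(1)] by blast
    have "\<not> I z1 B" "\<not> I z1 C"
      using block_unique[OF z1(1) q(1) z1(3) W(1) assms(2) z1(2) W(2) _ q(2)]
        block_unique[OF z1(1) q(1) z1(3) W(1) C(1) z1(2) W(2) _ C(2)] W(3,4) by blast+
    then have "Inl z1 \<in> \<Gamma> (Inr B) 3 \<inter> \<Gamma> (Inr C) 3"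
      by (simp add: Inl_mem_sphere_Inr_3_iff assms(2) C(1) z1(1))
    moreover have "Inl q \<in> \<Gamma> (Inl z1) 2"
      using z1 q(1) W(1,2) by (auto simp: Inl_mem_sphere_Inl_2)
    ultimately show ?thesis
      by (rule that)
  qed
  obtain z2 where z2: "Inl z2 \<in> \<Gamma> (Inr B) 3 \<inter> \<Gamma> (Inr C) 3" "Inl q \<notin> \<Gamma> (Inl z2) 2"
  proof -
    obtain a where a: "a \<in> P" "I a B" "a \<noteq> q"
      using ex_other_point_on_block[OF assms(2)] by blast
    obtain W where W: "W \<in> Bs" "I a W" "W \<noteq> B"
      using ex_third_block[OF a(1)] by metis
    obtain z2 where z2: "z2 \<in> P" "I z2 W" "z2 \<noteq> a"
      using ex_other_point_on_block[OF W(1)] by blast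
    have "\<not> I z2 B"
      using block_unique[OF z2(1) a(1) z2(3) W(1) assms(2) z2(2) W(2) _ a(2)] W(3) by blast
    have "\<not> I q W"
      using block_unique[OF q(1) a(1) a(3)[symmetric] W(1) assms(2) _ W(2) q(2) a(2)] W(3) by blast
    \<comment> \<open>A block U through z2 and q would be a second block through q meeting W, besides B.\<close>
    have not_collinear: "\<not> I q U" if "U \<in> Bs" "I z2 U" for U
    proof
      assume "I q U"
      then have "B = U"
        using meeting_blocks_eq[OF gq q(1) W(1) \<open>\<not> I q W\<close>] assms(2) q(2) a(1,2) W(2) z2(1,2) that
        unfolding meeting_blocks_def by blast
      with \<open>\<not> I z2 B\<close> that(2) show False
        by blast
    qed
    then have "\<not> I z2 C"
      using C(1,2) by blast
    then have "Inl z2 \<in> \<Gamma> (Inr B) 3 \<inter> \<Gamma> (Inr C) 3"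
      using \<open>\<not> I z2 B\<close> by (simp add: Inl_mem_sphere_Inr_3_iff assms(2) C(1) z2(1))
    moreover have "Inl q \<notin> \<Gamma> (Inl z2) 2"
      using not_collinear by (auto simp: Inl_mem_sphere_Inl_2[OF z2(1)])
    ultimately show ?thesis
      by (rule that)
  qed
  have "Inr C \<in> \<Gamma> (Inr B) 2"
    using q C by (auto simp: mem_sphere_Inr_2[OF assms(2)])
  moreover have "card (\<Gamma> (Inr B) 1 \<inter> \<Gamma> (Inr C) 1 \<inter> \<Gamma> (Inl z1) (3 - 1))
      \<noteq> card (\<Gamma> (Inr B) 1 \<inter> \<Gamma> (Inr C) 1 \<inter> \<Gamma> (Inl z2) (3 - 1))"
    using z1(2) z2(2) unfolding common by simp
  ultimately show ?thesis
    using assms(2) z1(1) z2(1) by (intro not_homogeneous_atI) auto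
qed

theorem almost_2_hom_iff_gq_axiom:
  assumes "B0 \<in> Bs" "C0 \<in> Bs" "\<forall>q\<in>P. \<not> (I q B0 \<and> I q C0)"
  shows "almost_2_hom (inc_graph_V P Bs) (inc_graph_E P Bs I) (Inr ` Bs) \<longleftrightarrow> gq_axiom"
proof
  assume "almost_2_hom (inc_graph_V P Bs) (inc_graph_E P Bs I) (Inr ` Bs)"
  then obtain D where "\<forall>x\<in>Inr ` Bs. has_eccentricity (inc_graph_V P Bs) (inc_graph_E P Bs I) x D"
    and hom: "hom_cond (inc_graph_V P Bs) (inc_graph_E P Bs I) (Inr ` Bs) (D - 2)"
    unfolding almost_2_hom_def by blast
  then have "4 \<le> D"
    using four_le_eccentricity[OF assms] assms(1) by blast
  then show gq_axiom
    using hom homogeneous_at_2_imp_gq_axiom by (auto simp: hom_cond_iff_homogeneous_at)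
next
  assume gq_axiom
  then show "almost_2_hom (inc_graph_V P Bs) (inc_graph_E P Bs I) (Inr ` Bs)"
    unfolding almost_2_hom_def hom_cond_iff_homogeneous_at
    using gq_has_eccentricity_4 homogeneous_at_1 gq_axiom_imp_homogeneous_at_2
    by (intro exI[of _ 4]) (auto simp: le_Suc_eq numeral_eq_Suc)
qed

theorem not_two_hom:
  assumes "B0 \<in> Bs" "C0 \<in> Bs" "\<forall>q\<in>P. \<not> (I q B0 \<and> I q C0)"
  shows "\<not> two_hom (inc_graph_V P Bs) (inc_graph_E P Bs I) (Inr ` Bs)"
proof
  assume "two_hom (inc_graph_V P Bs) (inc_graph_E P Bs I) (Inr ` Bs)"
  then obtain D where "\<forall>x\<in>Inr ` Bs. has_eccentricity (inc_graph_V P Bs) (inc_graph_E P Bs I) x D"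
    and hom: "hom_cond (inc_graph_V P Bs) (inc_graph_E P Bs I) (Inr ` Bs) (D - 1)"
    unfolding two_hom_def by blast
  then have "4 \<le> D"
    using four_le_eccentricity[OF assms] assms(1) by blast
  then have "homogeneous_at (inc_graph_V P Bs) (inc_graph_E P Bs I) (Inr ` Bs) 2"
    and "homogeneous_at (inc_graph_V P Bs) (inc_graph_E P Bs I) (Inr ` Bs) 3"
    using hom by (auto simp: hom_cond_iff_homogeneous_at)
  then show False
    using homogeneous_at_2_imp_gq_axiom gq_axiom_not_homogeneous_at_3 assms(1) by blast
qed

end

theorem proposition4p13:
  fixes P :: "'p set" and Bs :: "'b set" and I :: "'p \<Rightarrow> 'b \<Rightarrow> bool"
    and v b r k lam1 t :: nat
  assumes "SPBIBD P Bs I v b r k lam1 0 (k - 1) t"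
    and "quasi_symmetric P Bs I 0 1"
    and "r \<ge> 3"
  shows "(almost_2_hom (inc_graph_V P Bs) (inc_graph_E P Bs I) (Inr ` Bs)
            \<longleftrightarrow> generalized_quadrangle P Bs I v b r k)
       \<and> \<not> two_hom (inc_graph_V P Bs) (inc_graph_E P Bs I) (Inr ` Bs)"
proof -
  note des = SPBIBD_D(1)[OF assms(1)]
  obtain B0 C0 where disjoint: "B0 \<in> Bs" "C0 \<in> Bs" "\<forall>q\<in>P. \<not> (I q B0 \<and> I q C0)"
    using quasi_symmetric_0_1_ex_disjoint_blocks[OF assms(2) design_D(1)[OF des]] .
  obtain p1 B1 where "p1 \<in> P" "B1 \<in> Bs" "I p1 B1"
    using quasi_symmetric_0_1_ex_flag[OF assms(2)] .
  then have "1 \<le> k"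
    using design_D(1,4)[OF des] card_gt_0_iff[of "blk_pts P I B1"] by (force simp: blk_pts_def)
  show ?thesis
  proof (cases "k = 1")
    case True
    then have singletons: "\<forall>C\<in>Bs. card (blk_pts P I C) = 1"
      using design_D(4)[OF des] by blast
    obtain p where "p \<in> P" "\<not> I p B0"
      using design_ex_point_off_block[OF des disjoint(1)] by blast
    then show ?thesis
      using incidence_structure.blocks_singletons_not_2_hom[OF singletons disjoint(1)]
        incidence_structure.blocks_singletons_not_generalized_quadrangle[OF singletons disjoint(1)]
      by simp
  next
    case False
    interpret partial_linear_space P Bs I
      using quasi_symmetric_0_1_block_unique[OF assms(2) design_D(1)[OF des]] design_D(4)[OF des]
        \<open>1 \<le> k\<close> False by unfold_locales auto
    interpret joinable_space P Bs I
      using design_D(5)[OF des] assms(3) SPBIBD_nonflag_joinable[OF assms(1) _ disjoint(1)]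
      by unfold_locales auto
    show ?thesis
      using almost_2_hom_iff_gq_axiom[OF disjoint] not_two_hom[OF disjoint]
        generalized_quadrangle_iff_gq_axiom[OF des] assms(3) \<open>1 \<le> k\<close> by simp
  qed
qed

end
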